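(* Let $h,n\geq 2$. If every subgroup of $G=S_h\times S_n$ is a symmetry group with respect to $(h,n)$, then $\gcd(h,n!)=1$.
   Context: Permutations compose as $(\sigma\tau)(x)=\sigma(\tau(x))$. Let $\mathcal{P}=(S_n)^h$ (preference profiles), with $G$ acting by $(p^{(\varphi,\psi)})_i=\psi\,p_{\varphi^{-1}(i)}$. A social preference function (SPF) is any $F:\mathcal{P}\to S_n$; its symmetry group is $G(F)=\{(\varphi,\psi)\in G: F(p^{(\varphi,\psi)})=\psi F(p)\ \forall p\}$. $U\leq G$ is a symmetry group with respect to $(h,n)$ if $U=G(F)$ for some SPF $F$. *)

theory Defs
  imports "HOL-Algebra.Sym_Groups"
begin

text \<open>Voters are 1..h, alternatives are 1..n. A profile assigns to each voter
  a permutation of the alternatives; outside the voter set it is id (extensional).\<close>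

definition profiles :: "nat \<Rightarrow> nat \<Rightarrow> (nat \<Rightarrow> nat \<Rightarrow> nat) set" where
  "profiles h n = {p. (\<forall>i\<in>{1..h}. p i permutes {1..n}) \<and> (\<forall>i. i \<notin> {1..h} \<longrightarrow> p i = id)}"

definition prof_act :: "nat \<Rightarrow> (nat \<Rightarrow> nat \<Rightarrow> nat) \<Rightarrow> (nat \<Rightarrow> nat) \<times> (nat \<Rightarrow> nat) \<Rightarrow> (nat \<Rightarrow> nat \<Rightarrow> nat)" where
  "prof_act h p g = (\<lambda>i. if i \<in> {1..h} then snd g \<circ> p (Hilbert_Choice.inv (fst g) i) else id)"

definition is_SPF :: "nat \<Rightarrow> nat \<Rightarrow> ((nat \<Rightarrow> nat \<Rightarrow> nat) \<Rightarrow> (nat \<Rightarrow> nat)) \<Rightarrow> bool" where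
  "is_SPF h n F \<longleftrightarrow> (\<forall>p\<in>profiles h n. F p permutes {1..n})"

definition spf_symmetry_group :: "nat \<Rightarrow> nat \<Rightarrow> ((nat \<Rightarrow> nat \<Rightarrow> nat) \<Rightarrow> (nat \<Rightarrow> nat)) \<Rightarrow> ((nat \<Rightarrow> nat) \<times> (nat \<Rightarrow> nat)) set" where
  "spf_symmetry_group h n F =
     {(\<phi>, \<psi>). \<phi> permutes {1..h} \<and> \<psi> permutes {1..n} \<and>
        (\<forall>p\<in>profiles h n. F (prof_act h p (\<phi>, \<psi>)) = \<psi> \<circ> F p)}"

definition is_symmetry_group :: "nat \<Rightarrow> nat \<Rightarrow> ((nat \<Rightarrow> nat) \<times> (nat \<Rightarrow> nat)) set \<Rightarrow> bool" where
  "is_symmetry_group h n U \<longleftrightarrow> (\<exists>F. is_SPF h n F \<and> U = spf_symmetry_group h n F)"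

end

theory Submission
  imports Defs "HOL-Computational_Algebra.Primes"
begin

text \<open>Suppose a prime \<open>q\<close> divides both \<open>h\<close> and \<open>n!\<close>, so \<open>q \<le> n\<close>. Let \<open>\<phi>\<close> be the \<open>h\<close>-cycle
  \<open>i \<mapsto> i + 1\<close> on the voters and \<open>\<psi>\<close> the \<open>q\<close>-cycle \<open>x \<mapsto> x + 1\<close> on the alternatives
  \<open>1..q\<close>. Since \<open>\<psi>^h = 1\<close>, the profile \<open>p i = \<psi>^(i-1)\<close> is fixed by \<open>(\<phi>, \<psi>)\<close>. If \<open>(\<phi>, \<psi>)\<close>
  is a symmetry of an SPF \<open>F\<close>, then \<open>F p = \<psi> F p\<close>, forcing \<open>\<psi> = 1\<close>. Hence the whole group
  \<open>G\<close> is not a symmetry group.\<close>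

definition rotation :: "nat \<Rightarrow> nat \<Rightarrow> nat \<Rightarrow> nat" where
  "rotation q k x = (if x \<in> {1..q} then (x - 1 + k) mod q + 1 else x)"

lemma rotation_add:
  assumes "q > 0"
  shows "rotation q a \<circ> rotation q b = rotation q (a + b)"
proof
  fix x
  show "(rotation q a \<circ> rotation q b) x = rotation q (a + b) x"
  proof (cases "x \<in> {1..q}")
    case True
    have "(x - 1 + b) mod q + 1 \<in> {1..q}"
      using assms by (simp add: Suc_le_eq)
    moreover have "((x - 1 + b) mod q + a) mod q = (x - 1 + (a + b)) mod q"
      unfolding mod_add_left_eq by (simp add: ac_simps)
    ultimately show ?thesis
      using True by (simp add: rotation_def)
  qed (simp add: rotation_def del: atLeastAtMost_iff)
qed

lemma rotation_dvd_eq_id: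
  assumes "q dvd k"
  shows "rotation q k = id"
proof
  fix x
  show "rotation q k x = id x"
  proof (cases "x \<in> {1..q}")
    case True
    have "(x - 1 + k) mod q = (x - 1) mod q"
      using assms by (metis add.right_neutral dvd_imp_mod_0 mod_add_right_eq)
    also have "\<dots> = x - 1"
      using True by (intro mod_less) auto
    finally show ?thesis
      using True by (simp add: rotation_def)
  qed (simp add: rotation_def del: atLeastAtMost_iff)
qed

lemma rotation_permutes:
  assumes "q > 0"
  shows "rotation q k permutes {1..q}"
proof -
  have "rotation q k \<circ> rotation q ((q - 1) * k) = id"
       "rotation q ((q - 1) * k) \<circ> rotation q k = id"
    using assms by (simp_all add: rotation_add rotation_dvd_eq_id algebra_simps)
  then have "bij (rotation q k)"
    using o_bij by blast
  then show ?thesis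
    unfolding permutes_def by (auto simp: rotation_def bij_iff)
qed

lemma funpow_rotation_one:
  assumes "q > 0"
  shows "rotation q 1 ^^ k = rotation q k"
proof (induction k)
  case 0
  show ?case
    by (simp add: rotation_dvd_eq_id)
next
  case (Suc k)
  then show ?case
    using rotation_add[OF assms, of 1 k] by simp
qed

lemma rotation_one_neq_id:
  assumes "q \<ge> 2"
  shows "rotation q 1 \<noteq> id"
proof
  assume "rotation q 1 = id"
  then have "rotation q 1 1 = 1"
    by simp
  with assms show False
    by (simp add: rotation_def)
qed

lemma powers_profile_fixed_by_rotation:
  assumes "h > 0" and \<psi>: "\<psi> permutes {1..n}" and "\<psi> ^^ h = id"
  defines "p \<equiv> \<lambda>i. if i \<in> {1..h} then \<psi> ^^ (i - 1) else id"
  shows "p \<in> profiles h n" and "prof_act h p (rotation h 1, \<psi>) = p"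
proof -
  show "p \<in> profiles h n"
    using permutes_funpow[OF \<psi>] by (simp add: profiles_def p_def)
  have \<phi>: "rotation h 1 permutes {1..h}"
    using assms(1) by (rule rotation_permutes)
  have step: "\<psi> \<circ> p j = p (rotation h 1 j)" if j: "j \<in> {1..h}" for j
  proof -
    obtain k where k: "j = Suc k"
      using j by (cases j) auto
    have "\<psi> \<circ> p j = \<psi> ^^ Suc k"
      using j by (simp add: p_def k)
    also have "\<dots> = p (rotation h 1 j)"
    proof (cases "j = h")
      case True
      then show ?thesis
        using k \<open>\<psi> ^^ h = id\<close> by (simp add: p_def rotation_def)
    next
      case False
      then show ?thesis
        using j k by (simp add: p_def rotation_def)
    qed
    finally show ?thesis .
  qed
  show "prof_act h p (rotation h 1, \<psi>) = p"
  proof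
    fix i
    show "prof_act h p (rotation h 1, \<psi>) i = p i"
    proof (cases "i \<in> {1..h}")
      case True
      let ?j = "Hilbert_Choice.inv (rotation h 1) i"
      have "?j \<in> {1..h}" and "rotation h 1 ?j = i"
        using True permutes_in_image[OF permutes_inv[OF \<phi>]] permutes_inverses(1)[OF \<phi>]
        by blast+
      then show ?thesis
        using True step by (simp add: prof_act_def)
    qed (simp add: prof_act_def p_def del: atLeastAtMost_iff)
  qed
qed

lemma symmetry_fixing_profile_eq_id:
  assumes "is_SPF h n F" and "(\<phi>, \<psi>) \<in> spf_symmetry_group h n F"
    and "p \<in> profiles h n" and "prof_act h p (\<phi>, \<psi>) = p"
  shows "\<psi> = id"
proof -
  have "F (prof_act h p (\<phi>, \<psi>)) = \<psi> \<circ> F p"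
    using assms(2,3) by (simp add: spf_symmetry_group_def)
  then have "F p = \<psi> \<circ> F p"
    using assms(4) by simp
  moreover have "F p permutes {1..n}"
    using assms(1,3) unfolding is_SPF_def by blast
  then have "surj (F p)"
    by (rule permutes_surj)
  ultimately show ?thesis
    by (metis comp_apply eq_id_iff surjD)
qed

lemma full_symmetry_group_fixed_profile_eq_id:
  assumes "is_symmetry_group h n (carrier (sym_group h \<times>\<times> sym_group n))"
    and "\<phi> permutes {1..h}" and "\<psi> permutes {1..n}"
    and "p \<in> profiles h n" and "prof_act h p (\<phi>, \<psi>) = p"
  shows "\<psi> = id"
proof -
  obtain F where "is_SPF h n F"
    and "spf_symmetry_group h n F = carrier (sym_group h \<times>\<times> sym_group n)"
    using assms(1) unfolding is_symmetry_group_def by blast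
  moreover have "(\<phi>, \<psi>) \<in> carrier (sym_group h \<times>\<times> sym_group n)"
    using assms(2,3) by (simp add: sym_group_def)
  ultimately show ?thesis
    using symmetry_fixing_profile_eq_id assms(4,5) by metis
qed

lemma profile_fixed_by_nontrivial_symmetry:
  assumes "h > 0" and "q \<ge> 2" and "q dvd h" and "q \<le> n"
  obtains \<phi> \<psi> p where "\<phi> permutes {1..h}" and "\<psi> permutes {1..n}" and "\<psi> \<noteq> id"
    and "p \<in> profiles h n" and "prof_act h p (\<phi>, \<psi>) = p"
proof -
  let ?\<psi> = "rotation q 1"
  have \<psi>: "?\<psi> permutes {1..n}"
    using permutes_subset[OF rotation_permutes] assms(2,4) by simp
  have "?\<psi> ^^ h = rotation q h"
    using assms(2) by (intro funpow_rotation_one) simp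
  also have "\<dots> = id"
    using assms(3) by (rule rotation_dvd_eq_id)
  finally have "?\<psi> ^^ h = id" .
  then show ?thesis
    using that[OF rotation_permutes[OF assms(1)] \<psi> rotation_one_neq_id[OF assms(2)]]
      powers_profile_fixed_by_rotation[OF assms(1) \<psi>]
    by blast
qed

theorem mainTheorem11:
  fixes h n :: nat
  assumes "h \<ge> 2" and "n \<ge> 2"
    and "\<forall>U. subgroup U (sym_group h \<times>\<times> sym_group n) \<longrightarrow> is_symmetry_group h n U"
  shows "gcd h (fact n) = 1"
proof (rule ccontr)
  assume "gcd h (fact n) \<noteq> 1"
  then obtain q :: nat where "prime q" and "q dvd gcd h (fact n)"
    using prime_factor_nat by blast
  then have "q \<ge> 2" and "q dvd h" and "q \<le> n"
    by (simp_all add: prime_ge_2_nat prime_dvd_fact_iff)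
  moreover have "h > 0"
    using assms(1) by simp
  ultimately obtain \<phi> \<psi> p where \<phi>: "\<phi> permutes {1..h}" and \<psi>: "\<psi> permutes {1..n}"
    and "\<psi> \<noteq> id" and p: "p \<in> profiles h n" "prof_act h p (\<phi>, \<psi>) = p"
    using profile_fixed_by_nontrivial_symmetry by metis
  have "group (sym_group h \<times>\<times> sym_group n)"
    by (simp add: DirProd_group sym_group_is_group)
  then have "is_symmetry_group h n (carrier (sym_group h \<times>\<times> sym_group n))"
    using assms(3) group.subgroup_self by blast
  then have "\<psi> = id"
    using \<phi> \<psi> p by (rule full_symmetry_group_fixed_profile_eq_id)
  with \<open>\<psi> \<noteq> id\<close> show False ..
qed

end
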